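(* Let $G$ be a graph, let $k\ge 1$ and $d\ge 0$ be integers, and let $\mathcal M$ be a family of non-trivial vertex-disjoint paths in $G$ which is a size-minimum $(d,k)$-extension of itself. Then: (1) no path in $\mathcal M$ has length less than $2k-1$; and (2) for every two distinct paths $P_1,P_2\in\mathcal M$, every vertex $x$ in the $k$-end of $P_1$, every vertex $y$ in the $k$-end of $P_2$, every $a\in N(x)\setminus V(\mathcal M)$ and every $b\in N(y)\setminus V(\mathcal M)$, there is no $ab$-path of length at most $d$ in $G-V(\mathcal M)$.
   Context: A path is non-trivial if its length (number of edges) is at least $1$. For a family $\mathcal M$ of vertex-disjoint paths, $|\mathcal M|$ is the number of paths, $V(\mathcal M)$ the union of their vertex sets and $E(\mathcal M)$ the union of their edge sets. The $k$-end of a path is the set of (at most $2k$) vertices of the path at distance at most $k-1$ along the path from one of its two endpoints (endpoints included). Given a family $\mathcal M$ of non-trivial vertex-disjoint paths, a family $\mathcal M'$ of non-trivial vertex-disjoint paths is a $(d,k)$-extension of $\mathcal M$ if $\mu:=|\mathcal M|-|\mathcal M'|\ge 0$, $|E(\mathcal M)\setminus E(\mathcal M')|\le 2(k-1)\mu$ and $|E(\mathcal M')\setminus E(\mathcal M)|\le (d+2)\mu$. $\mathcal M'$ is a size-minimum $(d,k)$-extension of $\mathcal M$ if it is a $(d,k)$-extension of $\mathcal M$ and every $(d,k)$-extension $\mathcal M''$ of $\mathcal M$ satisfies $|\mathcal M''|\ge|\mathcal M'|$. $N(x)$ denotes the set of neighbors of $x$. *)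

theory Defs
  imports Main
begin

definition graph :: "'a set \<Rightarrow> 'a set set \<Rightarrow> bool" where
  "graph V E \<longleftrightarrow> finite V \<and> (\<forall>e\<in>E. \<exists>u v. e = {u, v} \<and> u \<noteq> v \<and> u \<in> V \<and> v \<in> V)"

definition nbrs :: "'a set set \<Rightarrow> 'a \<Rightarrow> 'a set" where
  "nbrs E x = {a. {x, a} \<in> E}"

definition is_path :: "'a set \<Rightarrow> 'a set set \<Rightarrow> 'a list \<Rightarrow> bool" where
  "is_path V E p \<longleftrightarrow> p \<noteq> [] \<and> distinct p \<and> set p \<subseteq> V \<and>
     (\<forall>i. Suc i < length p \<longrightarrow> {p ! i, p ! Suc i} \<in> E)"

definition path_len :: "'a list \<Rightarrow> nat" where
  "path_len p = length p - 1"

definition path_edges :: "'a list \<Rightarrow> 'a set set" where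
  "path_edges p = {{p ! i, p ! Suc i} | i. Suc i < length p}"

definition path_family :: "'a set \<Rightarrow> 'a set set \<Rightarrow> 'a list set \<Rightarrow> bool" where
  "path_family V E M \<longleftrightarrow> finite M \<and>
     (\<forall>p\<in>M. is_path V E p \<and> path_len p \<ge> 1) \<and>
     (\<forall>p\<in>M. \<forall>q\<in>M. p \<noteq> q \<longrightarrow> set p \<inter> set q = {})"

definition VM :: "'a list set \<Rightarrow> 'a set" where
  "VM M = (\<Union>p\<in>M. set p)"

definition EM :: "'a list set \<Rightarrow> 'a set set" where
  "EM M = (\<Union>p\<in>M. path_edges p)"

definition extension :: "'a set \<Rightarrow> 'a set set \<Rightarrow> nat \<Rightarrow> nat \<Rightarrow> 'a list set \<Rightarrow> 'a list set \<Rightarrow> bool" where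
  "extension V E d k M M' \<longleftrightarrow> path_family V E M' \<and> card M' \<le> card M \<and>
     card (EM M - EM M') \<le> 2 * (k - 1) * (card M - card M') \<and>
     card (EM M' - EM M) \<le> (d + 2) * (card M - card M')"

definition size_min_extension :: "'a set \<Rightarrow> 'a set set \<Rightarrow> nat \<Rightarrow> nat \<Rightarrow> 'a list set \<Rightarrow> 'a list set \<Rightarrow> bool" where
  "size_min_extension V E d k M M' \<longleftrightarrow> extension V E d k M M' \<and>
     (\<forall>M''. extension V E d k M M'' \<longrightarrow> card M'' \<ge> card M')"

definition k_end :: "nat \<Rightarrow> 'a list \<Rightarrow> 'a set" where
  "k_end k p = {p ! i | i. i < length p \<and> (i \<le> k - 1 \<or> length p - 1 - i \<le> k - 1)}"

end

theory Submission
  imports Defs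
begin

text \<open>Both parts are proved by exhibiting an extension of \<open>M\<close> with fewer paths, contradicting
size-minimality. A path of length at most \<open>2(k-1)\<close> can simply be deleted. For part (2), cut
\<open>P\<^sub>1\<close> and \<open>P\<^sub>2\<close> at \<open>x\<close> and \<open>y\<close>, keeping the longer pieces, and join them through
\<open>x a \<dots> b y\<close>: this replaces two paths by one, deletes at most \<open>2(k-1)\<close> edges (the discarded
end pieces, each of length at most \<open>k-1\<close>) and adds at most \<open>d+2\<close> edges.\<close>

lemma path_edges_Nil [simp]: "path_edges [] = {}"
  and path_edges_singleton [simp]: "path_edges [x] = {}"
  by (simp_all add: path_edges_def)

lemma path_edges_Cons_Cons [simp]:
  "path_edges (x # y # zs) = insert {x, y} (path_edges (y # zs))"
  unfolding path_edges_def
proof (intro equalityI subsetI)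
  fix e assume "e \<in> {{(x # y # zs) ! i, (x # y # zs) ! Suc i} | i. Suc i < length (x # y # zs)}"
  then obtain i where "e = {(x # y # zs) ! i, (x # y # zs) ! Suc i}" "Suc i < length (x # y # zs)"
    by blast
  then show "e \<in> insert {x, y} {{(y # zs) ! i, (y # zs) ! Suc i} | i. Suc i < length (y # zs)}"
    by (cases i) auto
next
  fix e assume "e \<in> insert {x, y} {{(y # zs) ! i, (y # zs) ! Suc i} | i. Suc i < length (y # zs)}"
  then show "e \<in> {{(x # y # zs) ! i, (x # y # zs) ! Suc i} | i. Suc i < length (x # y # zs)}"
  proof
    assume "e = {x, y}" then show ?thesis by (auto intro!: exI[of _ 0])
  next
    assume "e \<in> {{(y # zs) ! i, (y # zs) ! Suc i} | i. Suc i < length (y # zs)}"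
    then obtain i where "e = {(y # zs) ! i, (y # zs) ! Suc i}" "Suc i < length (y # zs)" by blast
    then show ?thesis by (auto intro!: exI[of _ "Suc i"])
  qed
qed

lemma path_edges_Cons:
  "path_edges (x # zs) = (if zs = [] then {} else insert {x, hd zs} (path_edges zs))"
  by (cases zs) auto

lemma path_edges_append:
  "path_edges (xs @ ys) = path_edges xs \<union> path_edges ys \<union>
     (if xs = [] \<or> ys = [] then {} else {{last xs, hd ys}})"
  by (induction xs) (auto simp: path_edges_Cons)

lemma path_edges_rev [simp]: "path_edges (rev xs) = path_edges xs"
  by (induction xs) (auto simp: path_edges_append path_edges_Cons last_rev insert_commute)

lemma finite_path_edges [simp]: "finite (path_edges xs)"
  and card_path_edges_le: "card (path_edges xs) \<le> path_len xs"
proof -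
  have "finite (path_edges xs) \<and> card (path_edges xs) \<le> length xs - 1"
  proof (induction xs)
    case (Cons x xs)
    then show ?case by (cases xs) (auto simp: path_edges_Cons card_insert_if)
  qed simp
  then show "finite (path_edges xs)" "card (path_edges xs) \<le> path_len xs"
    by (simp_all add: path_len_def)
qed

lemma path_edges_take_drop:
  "i < length xs \<Longrightarrow> path_edges xs = path_edges (take (Suc i) xs) \<union> path_edges (drop i xs)"
proof (induction xs arbitrary: i)
  case (Cons x xs)
  show ?case
  proof (cases i)
    case (Suc i')
    with Cons.prems have "i' < length xs" "xs \<noteq> []" by auto
    moreover have "hd (take (Suc i') xs) = hd xs" using \<open>xs \<noteq> []\<close> by (cases xs) auto
    ultimately show ?thesis using Cons.IH Suc by (auto simp: path_edges_Cons)
  qed simp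
qed simp

lemma is_path_iff_path_edges:
  "is_path V E p \<longleftrightarrow> p \<noteq> [] \<and> distinct p \<and> set p \<subseteq> V \<and> path_edges p \<subseteq> E"
  unfolding is_path_def path_edges_def by auto

lemma is_path_rev: "is_path V E (rev p) \<longleftrightarrow> is_path V E p"
  by (simp add: is_path_iff_path_edges)

lemma is_path_drop: "is_path V E p \<Longrightarrow> i < length p \<Longrightarrow> is_path V E (drop i p)"
  using path_edges_take_drop[of i p] set_drop_subset[of i p]
  by (auto simp: is_path_iff_path_edges)

lemma is_path_append:
  assumes "is_path V E xs" "is_path V E ys" "set xs \<inter> set ys = {}" "{last xs, hd ys} \<in> E"
  shows "is_path V E (xs @ ys)"
  using assms by (auto simp: is_path_iff_path_edges path_edges_append)

lemma is_path_mono: "is_path V E p \<Longrightarrow> V \<subseteq> W \<Longrightarrow> is_path W E p"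
  by (auto simp: is_path_def)

lemma is_path_join:
  assumes A: "is_path V E A" "i < length A" and B: "is_path V E B" "j < length B"
    and q: "is_path V E q"
    and disj: "set A \<inter> set B = {}" "set q \<inter> set A = {}" "set q \<inter> set B = {}"
    and edges: "{A ! i, hd q} \<in> E" "{last q, B ! j} \<in> E"
  shows "is_path V E (rev (drop i A) @ q @ drop j B)"
proof (rule is_path_append)
  show "is_path V E (rev (drop i A))" using A by (simp add: is_path_rev is_path_drop)
  show "is_path V E (q @ drop j B)"
    using is_path_drop[OF B] B(2) q disj(3) edges(2) set_drop_subset[of j B]
    by (intro is_path_append) (auto simp: hd_drop_conv_nth)
  show "set (rev (drop i A)) \<inter> set (q @ drop j B) = {}"
    using disj set_drop_subset[of i A] set_drop_subset[of j B] by auto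
  show "{last (rev (drop i A)), hd (q @ drop j B)} \<in> E"
    using A(2) q edges(1) by (simp add: last_rev hd_drop_conv_nth is_path_def)
qed

lemma path_edges_join:
  assumes "i < length A" "j < length B" "q \<noteq> []"
  shows "path_edges (rev (drop i A) @ q @ drop j B) =
    path_edges (drop i A) \<union> path_edges q \<union> path_edges (drop j B) \<union> {{A ! i, hd q}, {last q, B ! j}}"
  using assms by (auto simp: path_edges_append last_rev hd_drop_conv_nth)

lemma k_endE:
  assumes "x \<in> k_end k P"
  obtains A i where "A = P \<or> A = rev P" "i < length A" "i \<le> k - 1" "A ! i = x"
proof -
  obtain i where i: "x = P ! i" "i < length P" "i \<le> k - 1 \<or> length P - 1 - i \<le> k - 1"
    using assms unfolding k_end_def by blast
  show thesis
  proof (cases "i \<le> k - 1")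
    case True
    then show thesis using i that by blast
  next
    case False
    then show thesis
      using i that[of "rev P" "length P - 1 - i"] by (auto simp: rev_nth Suc_diff_Suc)
  qed
qed

lemma EM_insert: "EM (insert p M) = path_edges p \<union> EM M"
  by (simp add: EM_def)

lemma path_family_Diff: "path_family V E M \<Longrightarrow> path_family V E (M - S)"
  by (auto simp: path_family_def)

lemma path_family_insert:
  assumes M: "path_family V E M"
    and N: "is_path V E N" "path_len N \<ge> 1" "set N \<inter> VM M = {}"
  shows "path_family V E (insert N M)" and "card (insert N M) = Suc (card M)"
proof -
  have "N \<notin> M"
  proof
    assume "N \<in> M"
    then have "set N \<subseteq> VM M" by (auto simp: VM_def)
    moreover have "set N \<noteq> {}" using N(1) by (simp add: is_path_def)
    ultimately show False using N(3) by (simp add: Int_absorb2)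
  qed
  then show "card (insert N M) = Suc (card M)" using M by (simp add: path_family_def)
  have "set N \<inter> set p = {}" if "p \<in> M" for p
    using N(3) that by (auto simp: VM_def)
  then show "path_family V E (insert N M)"
    using M N(1,2) unfolding path_family_def by (simp add: Int_commute)
qed

lemma card_Suc_Suc_Diff_pair:
  assumes "finite M" "P1 \<in> M" "P2 \<in> M" "P1 \<noteq> P2"
  shows "card M = Suc (Suc (card (M - {P1, P2})))"
proof -
  have "card {P1, P2} = 2" "{P1, P2} \<subseteq> M" using assms by auto
  with \<open>finite M\<close> show ?thesis
    using card_mono[of M "{P1, P2}"] by (simp add: card_Diff_subset)
qed

lemma extension_Diff_short_path:
  assumes M: "path_family V E M" and P: "P \<in> M" and short: "path_len P \<le> 2 * (k - 1)"
  shows "extension V E d k M (M - {P})" and "card (M - {P}) < card M"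
proof -
  have fin: "finite M" using M by (simp add: path_family_def)
  then show less: "card (M - {P}) < card M" using P by (rule card_Diff1_less)
  have "EM M - EM (M - {P}) \<subseteq> path_edges P"
    using P by (auto simp: EM_def)
  then have "card (EM M - EM (M - {P})) \<le> path_len P"
    using card_mono[OF finite_path_edges] card_path_edges_le order_trans by blast
  moreover have "card M - card (M - {P}) = 1"
    using fin P card_gt_0_iff[of M] by (auto simp: card_Diff_singleton)
  moreover have "EM (M - {P}) - EM M = {}"
    by (auto simp: EM_def)
  then have "card (EM (M - {P}) - EM M) = 0"
    by (simp only: card.empty)
  ultimately show "extension V E d k M (M - {P})"
    using short less path_family_Diff[OF M] by (simp add: extension_def)
qed

lemma path_family_join_paths:
  assumes M: "path_family V E M" and P: "P1 \<in> M" "P2 \<in> M" "P1 \<noteq> P2"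
    and A: "A = P1 \<or> A = rev P1" "i < length A"
    and B: "B = P2 \<or> B = rev P2" "j < length B"
    and q: "is_path (V - VM M) E q"
    and edges: "{A ! i, hd q} \<in> E" "{last q, B ! j} \<in> E"
  defines "N \<equiv> rev (drop i A) @ q @ drop j B"
  shows "path_family V E (insert N (M - {P1, P2}))"
    and "card (insert N (M - {P1, P2})) = Suc (card (M - {P1, P2}))"
proof -
  have fam: "\<forall>p\<in>M. is_path V E p"
    and disj: "\<And>p p'. p \<in> M \<Longrightarrow> p' \<in> M \<Longrightarrow> p \<noteq> p' \<Longrightarrow> set p \<inter> set p' = {}"
    using M by (auto simp: path_family_def)
  have pathA: "is_path V E A" and pathB: "is_path V E B"
    using A(1) B(1) P fam by (auto simp: is_path_rev)
  have setA: "set A = set P1" and setB: "set B = set P2"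
    using A(1) B(1) by auto
  have q_outside: "set q \<inter> VM M = {}" and q_ne: "q \<noteq> []"
    using q by (auto simp: is_path_def)
  have P_inside: "set P1 \<subseteq> VM M" "set P2 \<subseteq> VM M"
    using P by (auto simp: VM_def)
  have pathN: "is_path V E N"
    unfolding N_def
  proof (rule is_path_join[OF pathA A(2) pathB B(2) is_path_mono[OF q] _ _ _ edges])
    show "set A \<inter> set B = {}" using disj P setA setB by blast
    show "set q \<inter> set A = {}" "set q \<inter> set B = {}"
      using q_outside P_inside setA setB by auto
  qed auto
  have "path_len N \<ge> 1"
    using A(2) q_ne by (simp add: N_def path_len_def flip: length_greater_0_conv)
  moreover have "set N \<inter> VM (M - {P1, P2}) = {}"
  proof -
    have "set N \<subseteq> set P1 \<union> set P2 \<union> set q"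
      using set_drop_subset[of i A] set_drop_subset[of j B] setA setB by (auto simp: N_def)
    moreover have "set r \<inter> (set P1 \<union> set P2 \<union> set q) = {}" if "r \<in> M - {P1, P2}" for r
      using that disj[of r P1] disj[of r P2] P q_outside by (auto simp: VM_def)
    ultimately show ?thesis by (auto simp: VM_def)
  qed
  ultimately show "path_family V E (insert N (M - {P1, P2}))"
    and "card (insert N (M - {P1, P2})) = Suc (card (M - {P1, P2}))"
    using path_family_insert[OF path_family_Diff[OF M] pathN] by auto
qed

lemma extension_join_paths:
  assumes M: "path_family V E M" and P: "P1 \<in> M" "P2 \<in> M" "P1 \<noteq> P2"
    and A: "A = P1 \<or> A = rev P1" "i < length A" "i \<le> k - 1"
    and B: "B = P2 \<or> B = rev P2" "j < length B" "j \<le> k - 1"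
    and q: "is_path (V - VM M) E q" "path_len q \<le> d"
    and edges: "{A ! i, hd q} \<in> E" "{last q, B ! j} \<in> E"
  defines "N \<equiv> rev (drop i A) @ q @ drop j B"
  shows "extension V E d k M (insert N (M - {P1, P2}))"
    and "card (insert N (M - {P1, P2})) < card M"
proof -
  define R where "R = M - {P1, P2}"
  note family = path_family_join_paths[OF M P A(1,2) B(1,2) q(1) edges, folded N_def R_def]
  have card_M: "card M = Suc (Suc (card R))"
    using M card_Suc_Suc_Diff_pair[OF _ P] by (simp add: path_family_def R_def)
  then show "card (insert N (M - {P1, P2})) < card M"
    using family(2) by (simp add: R_def)
  have "q \<noteq> []" using q(1) by (simp add: is_path_def)
  have "path_edges A = path_edges P1" "path_edges B = path_edges P2"
    using A(1) B(1) by auto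
  then have EM_M: "EM M = path_edges A \<union> path_edges B \<union> EM R"
    using P by (auto simp: EM_def R_def)
  have EM_N: "EM (insert N R) = path_edges (drop i A) \<union> path_edges q \<union> path_edges (drop j B)
      \<union> {{A ! i, hd q}, {last q, B ! j}} \<union> EM R"
    using path_edges_join[OF A(2) B(2) \<open>q \<noteq> []\<close>] by (simp add: EM_insert N_def)
  have "EM M - EM (insert N R) \<subseteq> path_edges (take (Suc i) A) \<union> path_edges (take (Suc j) B)"
    using path_edges_take_drop[OF A(2)] path_edges_take_drop[OF B(2)] EM_M EM_N by auto
  then have "card (EM M - EM (insert N R)) \<le> path_len (take (Suc i) A) + path_len (take (Suc j) B)"
    by (meson card_Un_le card_mono card_path_edges_le add_mono finite_UnI finite_path_edges order_trans)
  also have "\<dots> \<le> 2 * (k - 1)"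
    using A(2,3) B(2,3) by (simp add: path_len_def)
  finally have removed: "card (EM M - EM (insert N R)) \<le> 2 * (k - 1)" .
  have "EM (insert N R) - EM M \<subseteq> path_edges q \<union> {{A ! i, hd q}, {last q, B ! j}}"
    using EM_M EM_N path_edges_take_drop[OF A(2)] path_edges_take_drop[OF B(2)] by auto
  then have "card (EM (insert N R) - EM M) \<le> card (path_edges q) + card {{A ! i, hd q}, {last q, B ! j}}"
    by (meson card_Un_le card_mono finite_UnI finite_path_edges finite.emptyI finite_insert order_trans)
  also have "\<dots> \<le> d + 2"
    using card_path_edges_le[of q] q(2) card_insert_if[of "{{last q, B ! j}}" "{A ! i, hd q}"]
    by auto
  finally have added: "card (EM (insert N R) - EM M) \<le> d + 2" .
  show "extension V E d k M (insert N (M - {P1, P2}))"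
    using family removed added card_M by (simp add: extension_def R_def[symmetric])
qed

theorem lemma2p3:
  fixes V :: "'a set" and E :: "'a set set" and d k :: nat and M :: "'a list set"
  assumes "graph V E" and "k \<ge> 1"
    and "path_family V E M"
    and "size_min_extension V E d k M M"
  shows "(\<forall>P\<in>M. \<not> path_len P < 2 * k - 1) \<and>
    (\<forall>P1\<in>M. \<forall>P2\<in>M. \<forall>x y a b. P1 \<noteq> P2 \<longrightarrow> x \<in> k_end k P1 \<longrightarrow> y \<in> k_end k P2 \<longrightarrow>
       a \<in> nbrs E x - VM M \<longrightarrow> b \<in> nbrs E y - VM M \<longrightarrow>
       \<not> (\<exists>q. is_path (V - VM M) E q \<and> hd q = a \<and> last q = b \<and> path_len q \<le> d))"
proof (intro conjI ballI allI impI notI)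
  have minimal: "card M \<le> card M'" if "extension V E d k M M'" for M'
    using assms(4) that by (simp add: size_min_extension_def)
  show False if "P \<in> M" "path_len P < 2 * k - 1" for P
  proof -
    have "path_len P \<le> 2 * (k - 1)" using that(2) by linarith
    from extension_Diff_short_path[OF assms(3) that(1) this]
    show False using minimal by fastforce
  qed
  fix P1 P2 x y a b
  assume P: "P1 \<in> M" "P2 \<in> M" "P1 \<noteq> P2" and "x \<in> k_end k P1" "y \<in> k_end k P2"
    and a: "a \<in> nbrs E x - VM M" and b: "b \<in> nbrs E y - VM M"
    and "\<exists>q. is_path (V - VM M) E q \<and> hd q = a \<and> last q = b \<and> path_len q \<le> d"
  then obtain q where q: "is_path (V - VM M) E q" "hd q = a" "last q = b" "path_len q \<le> d"
    by blast
  obtain A i where A: "A = P1 \<or> A = rev P1" "i < length A" "i \<le> k - 1" "A ! i = x"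
    using k_endE[OF \<open>x \<in> k_end k P1\<close>] .
  obtain B j where B: "B = P2 \<or> B = rev P2" "j < length B" "j \<le> k - 1" "B ! j = y"
    using k_endE[OF \<open>y \<in> k_end k P2\<close>] .
  have "{A ! i, hd q} \<in> E" "{last q, B ! j} \<in> E"
    using a b A(4) B(4) q(2,3) by (auto simp: nbrs_def insert_commute)
  from extension_join_paths[OF assms(3) P A(1-3) B(1-3) q(1,4) this]
  show False using minimal by fastforce
qed

end
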